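(* Let $\mathcal N$ be a smooth manifold, $\gamma$ a symmetric $2$-covariant tensor field, $\boldsymbol\ell$ a one-form and $\ell^{(2)}$ a function on $\mathcal N$. Then $\{\mathcal N,\gamma,\boldsymbol\ell,\ell^{(2)}\}$ is null metric hypersurface data if and only if (i) $\mathrm{Rad}(\gamma|_p)$ is one-dimensional at every $p\in\mathcal N$, and (ii) for every $p$ and every non-zero $e_1\in\mathrm{Rad}(\gamma|_p)$, $\boldsymbol\ell|_p(e_1)\neq0$.
   Context: Metric hypersurface data: $\{\mathcal N,\gamma,\boldsymbol\ell,\ell^{(2)}\}$ such that $\boldsymbol{\mathcal A}|_p((W,a),(Z,b))=\gamma(W,Z)+a\boldsymbol\ell(Z)+b\boldsymbol\ell(W)+ab\ell^{(2)}$ on $T_p\mathcal N\times\mathbb R$ is non-degenerate for all $p$. Its inverse $\mathcal A((\boldsymbol\alpha,a),(\boldsymbol\beta,b))=P(\boldsymbol\alpha,\boldsymbol\beta)+a\,n(\boldsymbol\beta)+b\,n(\boldsymbol\alpha)+ab\,n^{(2)}$ defines $P$, a vector field $n$ and a function $n^{(2)}$; the data is null if $n^{(2)}=0$ everywhere. $\mathrm{Rad}(\gamma|_p)=\{X\in T_p\mathcal N:\gamma|_p(X,\cdot)=0\}$. *)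

theory Defs
  imports "HOL-Analysis.Analysis"
begin

text \<open>Pointwise model: points of the manifold are the elements of a type 'p,
  each tangent space T_p N is modelled by a fixed finite-dimensional real
  inner-product space 'v (of dimension n = dim N).\<close>

definition bigA :: "('v \<Rightarrow> 'v \<Rightarrow> real) \<Rightarrow> ('v \<Rightarrow> real) \<Rightarrow> real
                    \<Rightarrow> 'v \<Rightarrow> real \<Rightarrow> 'v \<Rightarrow> real \<Rightarrow> real" where
  "bigA g l l2 W a Z b = g W Z + a * l Z + b * l W + a * b * l2"

definition A_nondegenerate :: "('v::real_vector \<Rightarrow> 'v \<Rightarrow> real) \<Rightarrow> ('v \<Rightarrow> real) \<Rightarrow> real \<Rightarrow> bool" where
  "A_nondegenerate g l l2 \<longleftrightarrow>
     (\<forall>W a. (\<forall>Z b. bigA g l l2 W a Z b = 0) \<longrightarrow> W = 0 \<and> a = 0)"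

text \<open>n^(2) = (inverse of A)((0,1),(0,1)): the covector theta = (0,1) acts by
  (Z,b) |-> b; with A((V,c),.) = theta we get A^{-1}(theta,theta) = theta(V,c) = c.\<close>
definition n2 :: "('v \<Rightarrow> 'v \<Rightarrow> real) \<Rightarrow> ('v \<Rightarrow> real) \<Rightarrow> real \<Rightarrow> real" where
  "n2 g l l2 = (THE c. \<exists>V. \<forall>Z b. bigA g l l2 V c Z b = b)"

definition metric_hypersurface_data ::
  "('p \<Rightarrow> 'v::real_vector \<Rightarrow> 'v \<Rightarrow> real) \<Rightarrow> ('p \<Rightarrow> 'v \<Rightarrow> real) \<Rightarrow> ('p \<Rightarrow> real) \<Rightarrow> bool" where
  "metric_hypersurface_data g l l2 \<longleftrightarrow> (\<forall>p. A_nondegenerate (g p) (l p) (l2 p))"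

definition null_metric_hypersurface_data ::
  "('p \<Rightarrow> 'v::real_vector \<Rightarrow> 'v \<Rightarrow> real) \<Rightarrow> ('p \<Rightarrow> 'v \<Rightarrow> real) \<Rightarrow> ('p \<Rightarrow> real) \<Rightarrow> bool" where
  "null_metric_hypersurface_data g l l2 \<longleftrightarrow>
     metric_hypersurface_data g l l2 \<and> (\<forall>p. n2 (g p) (l p) (l2 p) = 0)"

definition Rad :: "('v \<Rightarrow> 'v \<Rightarrow> real) \<Rightarrow> 'v set" where
  "Rad g = {X. \<forall>Y. g X Y = 0}"

end

theory Submission
  imports Defs
begin

text \<open>Identify \<open>T\<^sub>p\<N> \<times> \<real>\<close> with a Euclidean space. The form \<open>\<A>\<close> is non-degenerate iff
  its flat map is injective, hence surjective, so the covector \<open>(0,1)\<close> is \<open>\<A>((V,c),\<cdot>)\<close>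
  for a unique \<open>(V,c)\<close>, and \<open>n\<^sup>(\<^sup>2\<^sup>) = c\<close>. If \<open>c = 0\<close>, then \<open>V\<close> is a radical vector with
  \<open>\<ell>(V) = 1\<close>, and non-degeneracy forbids non-zero radical vectors annihilated by \<open>\<ell>\<close>,
  so \<open>Rad \<gamma> = span {V}\<close>. Conversely, such a \<open>V\<close> satisfies \<open>\<A>((V,0),\<cdot>) = (0,1)\<close>, and
  testing a vector of the radical of \<open>\<A>\<close> against \<open>(V,0)\<close> and \<open>(0,1)\<close> shows that it vanishes.\<close>

text \<open>\<open>adjoint f 1\<close> is the vector representing a functional \<open>f\<close>: \<open>f y = adjoint f 1 \<bullet> y\<close>.\<close>

definition flat_map :: "('a::euclidean_space \<Rightarrow> 'a \<Rightarrow> real) \<Rightarrow> 'a \<Rightarrow> 'a" where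
  "flat_map B x = adjoint (B x) 1"

lemma inner_flat_map:
  assumes "linear (B x)"
  shows "flat_map B x \<bullet> y = B x y"
  using adjoint_clauses(2)[OF assms] by (simp add: flat_map_def)

lemma linear_flat_map:
  assumes B: "bilinear B"
  shows "linear (flat_map B)"
proof -
  have lin: "linear (B x)" for x
    using B by (simp add: bilinear_def)
  show ?thesis
  proof (rule linearI)
    fix x y
    show "flat_map B (x + y) = flat_map B x + flat_map B y"
      by (rule vector_eq_rdot[THEN iffD1], intro allI)
        (simp add: inner_add_left inner_flat_map lin bilinear_ladd[OF B])
  next
    fix c x
    show "flat_map B (c *\<^sub>R x) = c *\<^sub>R flat_map B x"
      by (rule vector_eq_rdot[THEN iffD1], intro allI)
        (simp add: inner_flat_map lin bilinear_lmul[OF B])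
  qed
qed

lemma bilinear_nondegenerate_represents:
  fixes B :: "'a::euclidean_space \<Rightarrow> 'a \<Rightarrow> real" and f :: "'a \<Rightarrow> real"
  assumes B: "bilinear B" and nondeg: "\<forall>x. (\<forall>y. B x y = 0) \<longrightarrow> x = 0" and f: "linear f"
  shows "\<exists>x. \<forall>y. B x y = f y"
proof -
  have lin: "linear (B x)" for x
    using B by (simp add: bilinear_def)
  have "inj (flat_map B)"
    unfolding linear_injective_0[OF linear_flat_map[OF B]]
    by (metis inner_flat_map inner_zero_left lin nondeg)
  then have "surj (flat_map B)"
    using linear_inj_imp_surj linear_flat_map[OF B] by blast
  then obtain x where x: "flat_map B x = adjoint f 1"
    by (metis surjD)
  have "B x y = f y" for y
  proof -
    have "B x y = flat_map B x \<bullet> y"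
      by (simp add: inner_flat_map lin)
    also have "\<dots> = f y"
      using adjoint_clauses(2)[OF f, of 1 y] by (simp add: x)
    finally show ?thesis .
  qed
  then show ?thesis by blast
qed

lemma bilinear_nondegenerate_left_unique:
  fixes B :: "'a::real_vector \<Rightarrow> 'b::real_vector \<Rightarrow> real"
  assumes B: "bilinear B" and nondeg: "\<forall>x. (\<forall>y. B x y = 0) \<longrightarrow> x = 0"
    and eq: "\<forall>y. B x y = B x' y"
  shows "x = x'"
proof -
  have "\<forall>y. B (x - x') y = 0"
    using eq by (simp add: bilinear_lsub[OF B])
  then show ?thesis
    using nondeg by auto
qed

definition A_form :: "('v \<Rightarrow> 'v \<Rightarrow> real) \<Rightarrow> ('v \<Rightarrow> real) \<Rightarrow> real
                        \<Rightarrow> 'v \<times> real \<Rightarrow> 'v \<times> real \<Rightarrow> real" where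
  "A_form g l l2 x y = bigA g l l2 (fst x) (snd x) (fst y) (snd y)"

lemma bilinear_A_form:
  assumes g: "bilinear g" and l: "linear l"
  shows "bilinear (A_form g l l2)"
  unfolding bilinear_def A_form_def bigA_def
  by (auto intro!: linearI simp: bilinear_ladd[OF g] bilinear_radd[OF g] bilinear_lmul[OF g]
      bilinear_rmul[OF g] linear_add[OF l] linear_scale[OF l] algebra_simps)

lemma A_nondegenerate_iff_A_form:
  "A_nondegenerate g l l2 \<longleftrightarrow> (\<forall>x. (\<forall>y. A_form g l l2 x y = 0) \<longrightarrow> x = 0)"
  by (auto simp: A_nondegenerate_def A_form_def zero_prod_def)

lemma n2_eqI:
  fixes g :: "'v::real_vector \<Rightarrow> 'v \<Rightarrow> real"
  assumes g: "bilinear g" and l: "linear l" and nondeg: "A_nondegenerate g l l2"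
    and V: "\<forall>Z b. bigA g l l2 V c Z b = b"
  shows "n2 g l l2 = c"
  unfolding n2_def
proof (rule the_equality)
  show "\<exists>V. \<forall>Z b. bigA g l l2 V c Z b = b"
    using V by blast
next
  fix c' assume "\<exists>V'. \<forall>Z b. bigA g l l2 V' c' Z b = b"
  then obtain V' where "\<forall>Z b. bigA g l l2 V' c' Z b = b" by blast
  then have "\<forall>y. A_form g l l2 (V', c') y = A_form g l l2 (V, c) y"
    using V by (simp add: A_form_def)
  with nondeg have "(V', c') = (V, c)"
    unfolding A_nondegenerate_iff_A_form
    by (rule bilinear_nondegenerate_left_unique[OF bilinear_A_form[OF g l]])
  then show "c' = c" by simp
qed

lemma n2_witness:
  fixes g :: "'v::euclidean_space \<Rightarrow> 'v \<Rightarrow> real"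
  assumes g: "bilinear g" and l: "linear l" and nondeg: "A_nondegenerate g l l2"
  shows "\<exists>V. \<forall>Z b. bigA g l l2 V (n2 g l l2) Z b = b"
proof -
  obtain x where "\<forall>y. A_form g l l2 x y = snd y"
    using bilinear_nondegenerate_represents[OF bilinear_A_form[OF g l], of l2 snd] nondeg
    by (auto simp: A_nondegenerate_iff_A_form linear_snd)
  then have x: "\<forall>Z b. bigA g l l2 (fst x) (snd x) Z b = b"
    by (simp add: A_form_def)
  moreover have "n2 g l l2 = snd x"
    using n2_eqI[OF g l nondeg x] .
  ultimately show ?thesis by auto
qed

lemma subspace_Rad:
  assumes "bilinear g"
  shows "subspace (Rad g)"
  unfolding subspace_def Rad_def
  by (simp add: bilinear_lzero[OF assms] bilinear_ladd[OF assms] bilinear_lmul[OF assms])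

lemma A_nondegenerate_n2_zero_iff:
  fixes g :: "'v::euclidean_space \<Rightarrow> 'v \<Rightarrow> real"
  assumes g: "bilinear g" and g_sym: "\<And>X Y. g X Y = g Y X" and l: "linear l"
  shows "(A_nondegenerate g l l2 \<and> n2 g l l2 = 0) \<longleftrightarrow>
    (\<exists>V\<in>Rad g. l V = 1) \<and> (\<forall>e\<in>Rad g. l e = 0 \<longrightarrow> e = 0)"
proof
  assume "A_nondegenerate g l l2 \<and> n2 g l l2 = 0"
  then have nondeg: "A_nondegenerate g l l2" and n2: "n2 g l l2 = 0" by auto
  obtain V where "\<forall>Z b. bigA g l l2 V 0 Z b = b"
    using n2_witness[OF g l nondeg] n2 by auto
  then have V: "g V Z + b * l V = b" for Z b
    by (simp add: bigA_def)
  have "V \<in> Rad g"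
    using V[of _ 0] by (simp add: Rad_def)
  moreover have "l V = 1"
    using V[of 0 1] by (simp add: bilinear_rzero[OF g])
  moreover have "e = 0" if "e \<in> Rad g" "l e = 0" for e
  proof -
    have "\<forall>Z b. bigA g l l2 e 0 Z b = 0"
      using that by (simp add: bigA_def Rad_def)
    with nondeg show ?thesis
      unfolding A_nondegenerate_def by blast
  qed
  ultimately show "(\<exists>V\<in>Rad g. l V = 1) \<and> (\<forall>e\<in>Rad g. l e = 0 \<longrightarrow> e = 0)"
    by blast
next
  assume "(\<exists>V\<in>Rad g. l V = 1) \<and> (\<forall>e\<in>Rad g. l e = 0 \<longrightarrow> e = 0)"
  then obtain V where V: "V \<in> Rad g" "l V = 1" and ker: "\<And>e. e \<in> Rad g \<Longrightarrow> l e = 0 \<Longrightarrow> e = 0"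
    by blast
  have gV: "g W V = 0" for W
    using V(1) g_sym[of W V] by (simp add: Rad_def)
  have nondeg: "A_nondegenerate g l l2"
    unfolding A_nondegenerate_def
  proof (intro allI impI)
    fix W a assume A: "\<forall>Z b. bigA g l l2 W a Z b = 0"
    have a: "a = 0"
      using A[rule_format, of V 0] by (simp add: bigA_def gV V(2))
    have "W \<in> Rad g"
      using A[rule_format, of _ 0] by (simp add: bigA_def Rad_def a)
    moreover have "l W = 0"
      using A[rule_format, of 0 1] by (simp add: bigA_def a bilinear_rzero[OF g])
    ultimately show "W = 0 \<and> a = 0"
      using ker a by simp
  qed
  have "\<forall>Z b. bigA g l l2 V 0 Z b = b"
    using V by (simp add: bigA_def Rad_def)
  then have "n2 g l l2 = 0"
    by (rule n2_eqI[OF g l nondeg])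
  with nondeg show "A_nondegenerate g l l2 \<and> n2 g l l2 = 0" ..
qed

lemma dim_eq_1_iff_if_kernel_trivial:
  fixes S :: "'v::euclidean_space set" and l :: "'v \<Rightarrow> real"
  assumes S: "subspace S" and l: "linear l" and ker: "\<forall>e\<in>S. l e = 0 \<longrightarrow> e = 0"
  shows "dim S = 1 \<longleftrightarrow> (\<exists>V\<in>S. l V = 1)"
proof
  assume "dim S = 1"
  then have "\<not> S \<subseteq> {0}"
    using dim_eq_0[of S] by simp
  then obtain e where e: "e \<in> S" "e \<noteq> 0"
    by blast
  then have "l e \<noteq> 0"
    using ker by blast
  then have "l ((1 / l e) *\<^sub>R e) = 1"
    by (simp add: linear_scale[OF l])
  moreover have "(1 / l e) *\<^sub>R e \<in> S"
    using S e(1) by (rule subspace_scale)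
  ultimately show "\<exists>V\<in>S. l V = 1" by blast
next
  assume "\<exists>V\<in>S. l V = 1"
  then obtain V where V: "V \<in> S" "l V = 1" by blast
  have "X \<in> span {V}" if "X \<in> S" for X
  proof -
    have "X - l X *\<^sub>R V \<in> S"
      using S V(1) that by (simp add: subspace_diff subspace_scale)
    moreover have "l (X - l X *\<^sub>R V) = 0"
      using V(2) by (simp add: linear_diff[OF l] linear_scale[OF l])
    ultimately have "X - l X *\<^sub>R V = 0"
      using ker by blast
    then show ?thesis
      by (metis eq_iff_diff_eq_0 span_base span_scale singletonI)
  qed
  moreover have "span {V} \<subseteq> S"
    using S V(1) by (simp add: span_minimal)
  ultimately have "S = span {V}"
    by blast
  moreover have "V \<noteq> 0"
    using V(2) linear_0[OF l] by auto
  ultimately show "dim S = 1"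
    by (simp add: dim_span dim_singleton)
qed

theorem lemma3p3:
  fixes g :: "'p \<Rightarrow> 'v::euclidean_space \<Rightarrow> 'v \<Rightarrow> real"
    and l :: "'p \<Rightarrow> 'v \<Rightarrow> real"
    and l2 :: "'p \<Rightarrow> real"
  assumes "\<And>p. bilinear (g p)"
    and "\<And>p X Y. g p X Y = g p Y X"
    and "\<And>p. linear (l p)"
  shows "null_metric_hypersurface_data g l l2 \<longleftrightarrow>
           (\<forall>p. dim (Rad (g p)) = 1) \<and>
           (\<forall>p. \<forall>e1 \<in> Rad (g p). e1 \<noteq> 0 \<longrightarrow> l p e1 \<noteq> 0)"
proof -
  have pointwise: "(A_nondegenerate (g p) (l p) (l2 p) \<and> n2 (g p) (l p) (l2 p) = 0) \<longleftrightarrow>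
      dim (Rad (g p)) = 1 \<and> (\<forall>e \<in> Rad (g p). e \<noteq> 0 \<longrightarrow> l p e \<noteq> 0)" for p
  proof (cases "\<forall>e \<in> Rad (g p). l p e = 0 \<longrightarrow> e = 0")
    case True
    then show ?thesis
      using A_nondegenerate_n2_zero_iff[OF assms, of p]
        dim_eq_1_iff_if_kernel_trivial[OF subspace_Rad[OF assms(1)] assms(3) True]
      by auto
  next
    case False
    then show ?thesis
      using A_nondegenerate_n2_zero_iff[OF assms, of p] by auto
  qed
  show ?thesis
    unfolding null_metric_hypersurface_data_def metric_hypersurface_data_def pointwise
      all_conj_distrib[symmetric] ..
qed

end
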